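(* Let $W$ be a real 2-dimensional vector space, $m\ge2$, and let $\varphi:S^mW^*\hookrightarrow(W^* )^{\otimes m}$ be the Veronese factorization structure, with (common) factorization curve $\psi:\mathbb{P}(W)\to\mathbb{P}(S^mW^* )$, $\psi(\ell)=(\ell^0)^{\otimes m}$. Let $\sigma^\vee\subset S^mW^*$ be a full-dimensional pointed convex polyhedral cone each of whose extremal rays lies on a line $\psi(t)$ for some $t\in\mathbb{P}(W)$. Then $\sigma^\vee$ is a cone over a simplicial polytope: every facet of $\sigma^\vee$ contains exactly $m$ extremal rays, and these are linearly independent.
   Context: $S^mW^*\subset(W^* )^{\otimes m}$ is the subspace of symmetric tensors (of dimension $m+1$); $\ell^0\subset W^*$ denotes the annihilator of a line $\ell\subset W$, and $(\ell^0)^{\otimes m}$ is the line spanned by $\alpha\otimes\cdots\otimes\alpha$ for $0\ne\alpha\in\ell^0$ (its image is the rational normal curve of degree $m$). A convex polyhedral cone is the set of nonnegative combinations of finitely many vectors; it is pointed if it contains no nontrivial linear subspace; an extremal ray is a 1-dimensional face, a facet a codimension-one face. *)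

theory Defs
  imports "HOL-Analysis.Analysis"
begin

text \<open>Coordinates: W = R^2 with dual basis e1*, e2* of W*.  A symmetric tensor
T in S^m W* has components T_{i1...im} depending only on how many indices equal 2;
the map T |-> (T_{1..1 2..2 (k twos)})_{k=0..m} is a linear isomorphism
S^m W* = R^(m+1).  We index the m+1 coordinates by a finite type 'n via a
bijection idx : 'n -> {0..m}.  For alpha = p e1* + q e2* (spanning l^0, where l
is the line spanned by (q,-p)), the tensor alpha^{(x)m} has coordinates
p^(m-k) q^k.\<close>

definition veronese_pt :: "('n \<Rightarrow> nat) \<Rightarrow> nat \<Rightarrow> real \<Rightarrow> real \<Rightarrow> real ^ 'n" where
  "veronese_pt idx m p q = (\<chi> i. p ^ (m - idx i) * q ^ (idx i))"

definition veronese_line :: "('n \<Rightarrow> nat) \<Rightarrow> nat \<Rightarrow> real \<Rightarrow> real \<Rightarrow> (real ^ 'n) set" where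
  "veronese_line idx m p q = span {veronese_pt idx m p q}"

definition polyhedral_cone :: "'a::real_vector set \<Rightarrow> bool" where
  "polyhedral_cone C \<longleftrightarrow>
     (\<exists>S. finite S \<and> C = {\<Sum>v\<in>S. c v *\<^sub>R v | c. \<forall>v\<in>S. c v \<ge> 0})"

definition pointed_cone :: "'a::real_vector set \<Rightarrow> bool" where
  "pointed_cone C \<longleftrightarrow> (\<forall>L. subspace L \<and> L \<subseteq> C \<longrightarrow> L = {0})"

definition extremal_ray :: "'a::euclidean_space set \<Rightarrow> 'a set \<Rightarrow> bool" where
  "extremal_ray C R \<longleftrightarrow> R face_of C \<and> aff_dim R = 1"

definition facet :: "'a::euclidean_space set \<Rightarrow> 'a set \<Rightarrow> bool" where
  "facet C F \<longleftrightarrow> F face_of C \<and> aff_dim F = aff_dim C - 1"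

definition ray :: "'a::real_vector \<Rightarrow> 'a set" where
  "ray v = {c *\<^sub>R v | c. c \<ge> 0}"

end

theory Submission
  imports Defs
begin

text \<open>A pointed polyhedral cone is generated by an irredundant finite set, whose elements span
exactly its extremal rays, and every face is generated by the generators it contains. A facet has
dimension \<open>m\<close>, so it contains at least \<open>m\<close> generators. Here each generator is a nonzero multiple
of a point \<open>(p^m, p^(m-1) q, \<dots>, q^m)\<close> of the rational normal curve, with pairwise
non-proportional parameters \<open>(p, q)\<close>, and any \<open>m + 1\<close> such points are linearly independent:
a binary form of degree \<open>m\<close> vanishing at \<open>m + 1\<close> distinct points of the projective line is
zero. Hence the generators on a facet are independent, and there are exactly \<open>m\<close> of them.\<close>

lemma binary_form_mul_linear_form:
  fixes P :: "(real \<times> real) set"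
  assumes "i \<le> m"
  shows "(\<Sum>x\<in>P. c x * (q * fst x - p * snd x) * fst x ^ (m - i) * snd x ^ i)
       = q * (\<Sum>x\<in>P. c x * fst x ^ (Suc m - i) * snd x ^ i)
         - p * (\<Sum>x\<in>P. c x * fst x ^ (Suc m - Suc i) * snd x ^ Suc i)"
proof -
  have "(\<Sum>x\<in>P. c x * (q * fst x - p * snd x) * fst x ^ (m - i) * snd x ^ i)
      = (\<Sum>x\<in>P. q * (c x * fst x ^ Suc (m - i) * snd x ^ i)
                  - p * (c x * fst x ^ (m - i) * snd x ^ Suc i))"
    by (intro sum.cong refl) (simp add: right_diff_distrib mult_ac)
  moreover have "Suc m - i = Suc (m - i)" using assms by simp
  ultimately show ?thesis by (simp add: sum_subtractf sum_distrib_left)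
qed

lemma binary_form_powers_independent:
  fixes P :: "(real \<times> real) set"
  assumes "finite P" "card P \<le> Suc m" "\<forall>x\<in>P. x \<noteq> (0,0)"
    "\<forall>x\<in>P. \<forall>y\<in>P. x \<noteq> y \<longrightarrow> fst x * snd y - snd x * fst y \<noteq> 0"
    "\<forall>i\<le>m. (\<Sum>x\<in>P. c x * fst x ^ (m - i) * snd x ^ i) = 0"
  shows "\<forall>x\<in>P. c x = 0"
  using assms
proof (induction m arbitrary: P c)
  case 0
  then have "card P \<le> 1" by simp
  with \<open>finite P\<close> have "P = {} \<or> (\<exists>x. P = {x})"
    by (metis One_nat_def card_0_eq card_1_singletonE le_SucE le_zero_eq)
  then show ?case using "0.prems"(5) by auto
next
  case (Suc m)
  show ?case
  proof (cases "P = {}")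
    case True then show ?thesis by simp
  next
    case False
    then obtain a where aP: "a \<in> P" by blast
    obtain a1 a2 where a: "a = (a1, a2)" by (cases a)
    define P' where "P' = P - {a}"
    have fP': "finite P'" using Suc.prems(1) by (simp add: P'_def)
    have cP': "card P' \<le> Suc m" using Suc.prems(2) aP Suc.prems(1) by (simp add: P'_def)
    have PP: "P = insert a P'" "a \<notin> P'" using aP by (auto simp: P'_def)
    txt \<open>Multiplying the form by the linear form vanishing at \<open>a\<close> lowers the number of
      points and raises the degree: this is the induction step.\<close>
    define c' where "c' x = c x * (a2 * fst x - a1 * snd x)" for x
    have eq: "(\<Sum>x\<in>P'. c' x * fst x ^ (m - i) * snd x ^ i) = 0" if "i \<le> m" for i
    proof -
      have "(\<Sum>x\<in>P'. c' x * fst x ^ (m - i) * snd x ^ i)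
          = (\<Sum>x\<in>P. c' x * fst x ^ (m - i) * snd x ^ i)"
        using PP fP' by (simp add: c'_def a)
      also have "\<dots> = 0"
        using binary_form_mul_linear_form[OF that, where P=P and c=c and p=a1 and q=a2]
          Suc.prems(5)[rule_format, of i] Suc.prems(5)[rule_format, of "Suc i"] that
        by (simp add: c'_def del: diff_Suc_Suc power_Suc)
      finally show ?thesis .
    qed
    have "\<forall>x\<in>P'. c' x = 0"
      by (rule Suc.IH[OF fP' cP']) (use Suc.prems(3,4) eq in \<open>auto simp: P'_def\<close>)
    moreover have "a2 * fst x - a1 * snd x \<noteq> 0" if "x \<in> P'" for x
    proof -
      have "x \<in> P" "x \<noteq> a" using that by (auto simp: P'_def)
      then have "fst x * snd a - snd x * fst a \<noteq> 0" using Suc.prems(4) aP by blast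
      then show ?thesis by (simp add: a algebra_simps)
    qed
    ultimately have rest: "\<forall>x\<in>P'. c x = 0" by (simp add: c'_def)
    then have sum_a: "(\<Sum>x\<in>P. c x * fst x ^ (Suc m - i) * snd x ^ i)
        = c a * a1 ^ (Suc m - i) * a2 ^ i" for i
      using PP fP' by (simp add: a)
    have "c a * a1 ^ Suc m = 0"
      using Suc.prems(5)[rule_format, of 0] sum_a[of 0] by (simp del: power_Suc)
    moreover have "c a * a2 ^ Suc m = 0"
      using Suc.prems(5)[rule_format, of "Suc m"] sum_a[of "Suc m"] by (simp del: power_Suc)
    ultimately have "c a = 0" using Suc.prems(3) aP a by auto
    then show ?thesis using rest PP by auto
  qed
qed

lemma veronese_pt_scale:
  assumes "\<And>i. idx i \<le> m"
  shows "veronese_pt idx m (l * p) (l * q) = l ^ m *\<^sub>R veronese_pt idx m p q"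
proof -
  have "(l * p) ^ (m - idx i) * (l * q) ^ idx i = l ^ m * (p ^ (m - idx i) * q ^ idx i)" for i
  proof -
    have "l ^ (m - idx i) * l ^ idx i = l ^ m" using assms[of i] by (simp flip: power_add)
    then show ?thesis by (simp add: power_mult_distrib)
  qed
  then show ?thesis by (simp add: vec_eq_iff veronese_pt_def)
qed

lemma veronese_pt_in_span_if_proportional:
  assumes "\<And>i. idx i \<le> m" "(p, q) \<noteq> (0, 0)" "p * q' = q * p'"
  shows "veronese_pt idx m p' q' \<in> span {veronese_pt idx m p q}"
proof -
  obtain l where "p' = l * p" "q' = l * q"
  proof (cases "p = 0")
    case True
    then have "q \<noteq> 0" "p' = 0" using assms(2,3) by auto
    then show ?thesis using True that[of "q' / q"] by simp
  next
    case False
    then show ?thesis using assms(3) that[of "p' / p"] by (simp add: field_simps)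
  qed
  then show ?thesis using veronese_pt_scale[of idx m l p q] assms(1)
    by (simp add: span_base span_scale)
qed

lemma veronese_pts_sum_eq_0:
  assumes "bij_betw idx UNIV {0..m}"
    and "finite P" "card P \<le> Suc m" "\<forall>x\<in>P. x \<noteq> (0,0)"
    and "\<forall>x\<in>P. \<forall>y\<in>P. x \<noteq> y \<longrightarrow> fst x * snd y - snd x * fst y \<noteq> 0"
    and "(\<Sum>x\<in>P. c x *\<^sub>R veronese_pt idx m (fst x) (snd x)) = 0"
  shows "\<forall>x\<in>P. c x = 0"
proof (rule binary_form_powers_independent[OF assms(2-5)], intro allI impI)
  fix i assume "i \<le> m"
  then obtain t where t: "idx t = i" using assms(1) by (force simp: bij_betw_def)
  have "(\<Sum>x\<in>P. c x * fst x ^ (m - i) * snd x ^ i)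
      = (\<Sum>x\<in>P. c x *\<^sub>R veronese_pt idx m (fst x) (snd x)) $ t"
    by (simp add: veronese_pt_def t mult.assoc)
  then show "(\<Sum>x\<in>P. c x * fst x ^ (m - i) * snd x ^ i) = 0" using assms(6) by simp
qed

lemma scaled_veronese_pts_independent:
  fixes W :: "(real ^ 'n) set"
  assumes idx: "bij_betw idx UNIV {0..m}"
    and W: "finite W" "card W \<le> Suc m"
    and pt: "\<And>v. v \<in> W \<Longrightarrow> pt v \<noteq> (0,0)"
    and non_proportional: "\<And>v w. v \<in> W \<Longrightarrow> w \<in> W \<Longrightarrow> v \<noteq> w \<Longrightarrow>
      fst (pt v) * snd (pt w) - snd (pt v) * fst (pt w) \<noteq> 0"
    and s: "\<And>v. v \<in> W \<Longrightarrow> s v \<noteq> 0"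
    and v_eq: "\<And>v. v \<in> W \<Longrightarrow> v = s v *\<^sub>R veronese_pt idx m (fst (pt v)) (snd (pt v))"
  shows "independent W"
proof -
  have inj: "inj_on pt W"
  proof (rule inj_onI)
    fix v w assume "v \<in> W" "w \<in> W" "pt v = pt w"
    then show "v = w" using non_proportional[of v w] by (auto simp: mult.commute)
  qed
  have "u v = 0" if u: "(\<Sum>v\<in>W. u v *\<^sub>R v) = 0" and v: "v \<in> W" for u v
  proof -
    define c where "c x = u (inv_into W pt x) * s (inv_into W pt x)" for x
    have c_pt: "c (pt v) = u v * s v" if "v \<in> W" for v
      using inv_into_f_f[OF inj that] by (simp add: c_def)
    have "(\<Sum>x\<in>pt ` W. c x *\<^sub>R veronese_pt idx m (fst x) (snd x))
        = (\<Sum>v\<in>W. u v *\<^sub>R (s v *\<^sub>R veronese_pt idx m (fst (pt v)) (snd (pt v))))"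
      by (simp add: sum.reindex[OF inj] c_pt)
    also have "\<dots> = (\<Sum>v\<in>W. u v *\<^sub>R v)" using v_eq by (metis (no_types, lifting) sum.cong)
    also have "\<dots> = 0" by (rule u)
    finally have "\<forall>x\<in>pt ` W. c x = 0"
      using veronese_pts_sum_eq_0[OF idx, of "pt ` W" c] W inj pt non_proportional
      by (auto simp: card_image)
    then show "u v = 0" using c_pt[OF v] s[OF v] v by auto
  qed
  then show ?thesis using dependent_finite[OF W(1)] by auto
qed

text \<open>Two Veronese points with proportional parameters are parallel, so parameters of
non-parallel vectors on Veronese lines are pairwise non-proportional.\<close>

lemma veronese_family_independent:
  fixes W :: "(real ^ 'n) set"
  assumes idx: "bij_betw idx UNIV {0..m}"
    and W: "finite W" "card W \<le> Suc m"
    and on_curve: "\<forall>v\<in>W. v \<noteq> 0 \<and> (\<exists>p q. (p, q) \<noteq> (0, 0) \<and> v \<in> veronese_line idx m p q)"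
    and not_parallel: "\<And>v w. v \<in> W \<Longrightarrow> w \<in> W \<Longrightarrow> v \<noteq> w \<Longrightarrow> w \<notin> span {v}"
  shows "independent W"
proof -
  have "\<forall>v\<in>W. \<exists>z. fst z \<noteq> (0,0) \<and> snd z \<noteq> 0 \<and>
          v = snd z *\<^sub>R veronese_pt idx m (fst (fst z)) (snd (fst z))"
  proof
    fix v assume v: "v \<in> W"
    obtain p q where pq: "(p, q) \<noteq> (0, 0)" "v \<in> span {veronese_pt idx m p q}"
      using on_curve v unfolding veronese_line_def by blast
    then obtain s where s: "v = s *\<^sub>R veronese_pt idx m p q" by (auto simp: span_singleton)
    then have "s \<noteq> 0" using on_curve v by auto
    then show "\<exists>z. fst z \<noteq> (0,0) \<and> snd z \<noteq> 0 \<and>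
        v = snd z *\<^sub>R veronese_pt idx m (fst (fst z)) (snd (fst z))"
      using pq s by (intro exI[of _ "((p, q), s)"]) auto
  qed
  then obtain z where z: "\<forall>v\<in>W. fst (z v) \<noteq> (0,0) \<and> snd (z v) \<noteq> 0 \<and>
      v = snd (z v) *\<^sub>R veronese_pt idx m (fst (fst (z v))) (snd (fst (z v)))"
    by (metis (no_types) bchoice)
  define pt where "pt v = fst (z v)" for v
  define s where "s v = snd (z v)" for v
  have pt: "pt v \<noteq> (0,0)" and s: "s v \<noteq> 0"
    and v_eq: "v = s v *\<^sub>R veronese_pt idx m (fst (pt v)) (snd (pt v))" if "v \<in> W" for v
    using z that by (auto simp: pt_def s_def)
  have "fst (pt v) * snd (pt w) - snd (pt v) * fst (pt w) \<noteq> 0"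
    if vw: "v \<in> W" "w \<in> W" "v \<noteq> w" for v w
  proof
    assume "fst (pt v) * snd (pt w) - snd (pt v) * fst (pt w) = 0"
    moreover have "idx i \<le> m" for i using idx by (auto simp: bij_betw_def)
    ultimately have "veronese_pt idx m (fst (pt w)) (snd (pt w))
        \<in> span {veronese_pt idx m (fst (pt v)) (snd (pt v))}"
      using pt[OF vw(1)] by (intro veronese_pt_in_span_if_proportional) auto
    also have "span {veronese_pt idx m (fst (pt v)) (snd (pt v))} = span {v}"
      using v_eq[OF vw(1)] s[OF vw(1)]
        span_image_scale[of "{veronese_pt idx m (fst (pt v)) (snd (pt v))}" "\<lambda>_. s v"]
      by simp
    finally have "w \<in> span {v}" using v_eq[OF vw(2)] by (metis span_scale)
    then show False using not_parallel vw by blast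
  qed
  then show ?thesis using scaled_veronese_pts_independent[OF idx W] pt s v_eq by blast
qed

definition cone_generated_by :: "'a::real_vector set \<Rightarrow> 'a set" where
  "cone_generated_by S = {\<Sum>v\<in>S. c v *\<^sub>R v | c. \<forall>v\<in>S. c v \<ge> 0}"

lemma polyhedral_cone_iff: "polyhedral_cone C \<longleftrightarrow> (\<exists>S. finite S \<and> C = cone_generated_by S)"
  by (simp add: polyhedral_cone_def cone_generated_by_def)

lemma zero_in_cone_generated_by: "0 \<in> cone_generated_by S"
  unfolding cone_generated_by_def by (rule CollectI, rule exI[of _ "\<lambda>_. 0"]) simp

lemma conic_cone_generated_by: "conic (cone_generated_by S)"
  unfolding conic_def
proof (intro allI impI)
  fix x and a :: real assume "x \<in> cone_generated_by S" "a \<ge> 0"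
  then obtain c where c: "\<forall>v\<in>S. c v \<ge> 0" "x = (\<Sum>v\<in>S. c v *\<^sub>R v)"
    unfolding cone_generated_by_def by blast
  have "a *\<^sub>R x = (\<Sum>v\<in>S. (a * c v) *\<^sub>R v)" by (simp add: c scaleR_sum_right)
  then show "a *\<^sub>R x \<in> cone_generated_by S"
    unfolding cone_generated_by_def using c \<open>a \<ge> 0\<close> by (auto intro!: exI[of _ "\<lambda>v. a * c v"])
qed

lemma cone_generated_by_mono:
  assumes "finite S" "T \<subseteq> S"
  shows "cone_generated_by T \<subseteq> cone_generated_by S"
proof
  fix x assume "x \<in> cone_generated_by T"
  then obtain c where c: "\<forall>v\<in>T. c v \<ge> 0" "x = (\<Sum>v\<in>T. c v *\<^sub>R v)"
    unfolding cone_generated_by_def by blast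
  define c' where "c' v = (if v \<in> T then c v else 0)" for v
  have "(\<Sum>v\<in>S. c' v *\<^sub>R v) = (\<Sum>v\<in>T. c' v *\<^sub>R v)"
    by (rule sum.mono_neutral_right) (use assms in \<open>auto simp: c'_def\<close>)
  also have "\<dots> = x" by (simp add: c c'_def)
  finally show "x \<in> cone_generated_by S" unfolding cone_generated_by_def using c(1)
    by (intro CollectI exI[of _ c']) (auto simp: c'_def)
qed

lemma generator_in_cone_generated_by:
  assumes "finite S" "v \<in> S"
  shows "v \<in> cone_generated_by S"
proof -
  have e: "(\<lambda>w. (if w = v then 1 else 0) *\<^sub>R w) = (\<lambda>w. if w = v then w else 0)" by auto
  have "(\<Sum>w\<in>S. (if w = v then 1 else 0) *\<^sub>R w) = v"
    unfolding e using assms by simp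
  then show ?thesis unfolding cone_generated_by_def
    by (intro CollectI exI[of _ "\<lambda>w. if w = v then 1 else 0"]) auto
qed

lemma cone_generated_by_subset_span: "cone_generated_by S \<subseteq> span S"
  unfolding cone_generated_by_def by (auto intro!: span_sum span_scale intro: span_base)

lemma cone_generated_by_remove_redundant:
  assumes "finite S" "v \<in> S" "v \<in> cone_generated_by (S - {v})"
  shows "cone_generated_by (S - {v}) = cone_generated_by S"
proof
  show "cone_generated_by (S - {v}) \<subseteq> cone_generated_by S"
    using assms by (intro cone_generated_by_mono) auto
  show "cone_generated_by S \<subseteq> cone_generated_by (S - {v})"
  proof
    fix x assume "x \<in> cone_generated_by S"
    then obtain c where c: "\<forall>w\<in>S. c w \<ge> 0" "x = (\<Sum>w\<in>S. c w *\<^sub>R w)"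
      unfolding cone_generated_by_def by blast
    obtain d where d: "\<forall>w\<in>S-{v}. d w \<ge> 0" "v = (\<Sum>w\<in>S-{v}. d w *\<^sub>R w)"
      using assms(3) unfolding cone_generated_by_def by blast
    have "x = c v *\<^sub>R v + (\<Sum>w\<in>S-{v}. c w *\<^sub>R w)" using c(2) assms by (simp add: sum.remove)
    also have "\<dots> = (\<Sum>w\<in>S-{v}. (c v * d w + c w) *\<^sub>R w)"
      by (subst d(2)) (simp add: scaleR_sum_right scaleR_add_left sum.distrib)
    finally show "x \<in> cone_generated_by (S - {v})"
      unfolding cone_generated_by_def using c(1) d(1) assms(2)
      by (intro CollectI exI[of _ "\<lambda>w. c v * d w + c w"]) auto
  qed
qed

text \<open>A generating set of least cardinality has no redundant generator.\<close>

lemma polyhedral_cone_minimal_generators: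
  assumes "polyhedral_cone C"
  obtains S where "finite S" "C = cone_generated_by S"
    "\<And>v. v \<in> S \<Longrightarrow> v \<notin> cone_generated_by (S - {v})"
proof -
  define n where "n = (LEAST n. \<exists>S. finite S \<and> card S = n \<and> cone_generated_by S = C)"
  have "\<exists>S. finite S \<and> card S = n \<and> cone_generated_by S = C"
    unfolding n_def by (rule LeastI_ex) (use assms in \<open>auto simp: polyhedral_cone_iff\<close>)
  then obtain S where S: "finite S" "card S = n" "cone_generated_by S = C" by blast
  have "v \<notin> cone_generated_by (S - {v})" if v: "v \<in> S" for v
  proof
    assume "v \<in> cone_generated_by (S - {v})"
    then have "cone_generated_by (S - {v}) = C"
      using cone_generated_by_remove_redundant S v by metis
    then have "n \<le> card (S - {v})" unfolding n_def by (intro Least_le) (use S in auto)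
    then show False using S v card_Diff1_less by fastforce
  qed
  then show thesis using S that by blast
qed

lemma pointed_coneD:
  assumes "pointed_cone C" "conic C" "x \<in> C" "- x \<in> C"
  shows "x = 0"
proof -
  have "span {x} \<subseteq> C"
  proof
    fix y assume "y \<in> span {x}"
    then obtain k where k: "y = k *\<^sub>R x" by (auto simp: span_singleton)
    show "y \<in> C"
    proof (cases "k \<ge> 0")
      case True then show ?thesis using conicD[OF assms(2,3)] k by auto
    next
      case False
      then show ?thesis using conicD[OF assms(2,4), of "-k"] k by simp
    qed
  qed
  then have "span {x} = {0}" using assms(1) unfolding pointed_cone_def by (metis subspace_span)
  then show ?thesis using span_base[of x "{x}"] by auto
qed

lemma face_of_conic_scaleR:
  assumes C: "conic C" and F: "F face_of C" and y: "y \<in> F" and s: "s \<ge> 0"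
  shows "s *\<^sub>R y \<in> F"
proof (cases "y = 0")
  case True then show ?thesis using y by simp
next
  case False
  have yC: "y \<in> C" using F y face_of_imp_subset by blast
  have zero: "0 \<in> C" using conicD[OF C yC, of 0] by simp
  have "y \<in> open_segment 0 (2 *\<^sub>R y)"
    unfolding in_segment using False by (intro conjI exI[of _ "1/2"]) auto
  then have "0 \<in> F" using face_ofD[OF F _ zero _ y] yC conicD[OF C yC, of 2] by auto
  show ?thesis
  proof (cases "s \<le> 1")
    case True
    have "(1 - s) *\<^sub>R 0 + s *\<^sub>R y \<in> F"
      using face_of_imp_convex[OF F] \<open>0 \<in> F\<close> y s True by (intro convexD) auto
    then show ?thesis by simp
  next
    case False
    have "y \<in> open_segment 0 (s *\<^sub>R y)"
      unfolding in_segment using False \<open>y \<noteq> 0\<close> by (intro conjI exI[of _ "1/s"]) auto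
    then show ?thesis using face_ofD[OF F _ zero _ y] yC conicD[OF C yC, of s] s by auto
  qed
qed

lemma zero_in_face_of_conic: "conic C \<Longrightarrow> F face_of C \<Longrightarrow> F \<noteq> {} \<Longrightarrow> 0 \<in> F"
  using face_of_conic_scaleR[of C F _ 0] by auto

lemma aff_dim_eq_dim_if_zero_mem:
  fixes S :: "'a::euclidean_space set"
  assumes "0 \<in> S"
  shows "aff_dim S = int (dim S)"
  using aff_dim_eq_dim[of 0 S] hull_inc[OF assms] by simp

lemma ray_base: "v \<in> ray v"
  unfolding ray_def by (auto intro!: exI[of _ 1])

lemma span_ray: "span (ray v) = span {v}"
proof -
  have "ray v \<subseteq> span {v}" unfolding ray_def by (auto intro: span_scale span_base)
  moreover have "{v} \<subseteq> span (ray v)" using ray_base by (auto intro: span_base)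
  ultimately show ?thesis by (simp add: span_eq)
qed

lemma aff_dim_ray:
  fixes v :: "'a::euclidean_space"
  assumes "v \<noteq> 0"
  shows "aff_dim (ray v) = 1"
proof -
  have "0 \<in> ray v" unfolding ray_def by (auto intro!: exI[of _ 0])
  then have "aff_dim (ray v) = int (dim (span (ray v)))"
    by (simp add: aff_dim_eq_dim_if_zero_mem)
  then show ?thesis using assms by (simp add: span_ray)
qed

lemma convex_ray: "convex (ray v)"
  unfolding convex_def ray_def
proof clarify
  fix u w c d :: real
  assume "0 \<le> u" "0 \<le> w" "u + w = 1" "0 \<le> c" "0 \<le> d"
  then show "\<exists>e. u *\<^sub>R c *\<^sub>R v + w *\<^sub>R d *\<^sub>R v = e *\<^sub>R v \<and> 0 \<le> e"
    by (intro exI[of _ "u*c + w*d"]) (simp add: scaleR_add_left)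
qed

locale minimally_generated_cone =
  fixes S :: "'a::euclidean_space set" and C :: "'a set"
  assumes finite_generators: "finite S"
    and cone_eq: "C = cone_generated_by S"
    and irredundant: "\<And>v. v \<in> S \<Longrightarrow> v \<notin> cone_generated_by (S - {v})"
    and pointed: "\<And>x. x \<in> C \<Longrightarrow> - x \<in> C \<Longrightarrow> x = 0"
begin

lemma conic: "conic C"
  by (simp add: cone_eq conic_cone_generated_by)

lemma generator_in_cone: "v \<in> S \<Longrightarrow> v \<in> C"
  by (simp add: cone_eq finite_generators generator_in_cone_generated_by)

lemma generator_nonzero: "v \<in> S \<Longrightarrow> v \<noteq> 0"
  using irredundant zero_in_cone_generated_by by metis

lemma nonneg_comb_eq_0:
  assumes "\<forall>w\<in>S. d w \<ge> 0" "(\<Sum>w\<in>S. d w *\<^sub>R w) = 0" "w \<in> S"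
  shows "d w = 0"
proof -
  have "- (d w *\<^sub>R w) = (\<Sum>v\<in>S-{w}. d v *\<^sub>R v)"
    using assms(2,3) finite_generators by (simp add: sum.remove neg_eq_iff_add_eq_0)
  also have "\<dots> \<in> cone_generated_by (S - {w})"
    unfolding cone_generated_by_def using assms(1) by auto
  also have "\<dots> \<subseteq> C"
    unfolding cone_eq by (rule cone_generated_by_mono[OF finite_generators]) auto
  finally have "d w *\<^sub>R w = 0"
    using pointed conicD[OF conic generator_in_cone[OF assms(3)]] assms(1,3) by blast
  then show ?thesis using generator_nonzero assms(3) by simp
qed

lemma generator_not_in_span_of_other:
  assumes "v \<in> S" "w \<in> S" "v \<noteq> w"
  shows "w \<notin> span {v}"
proof
  assume "w \<in> span {v}"
  then obtain \<mu> where w: "w = \<mu> *\<^sub>R v" by (auto simp: span_singleton)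
  show False
  proof (cases "\<mu> > 0")
    case True
    have "v \<in> cone_generated_by (S - {w})"
      using assms finite_generators by (intro generator_in_cone_generated_by) auto
    then have "w \<in> cone_generated_by (S - {w})"
      using conicD[OF conic_cone_generated_by, of v "S - {w}" \<mu>] True w by simp
    then show False using irredundant assms(2) by blast
  next
    case False
    then have "- w \<in> C" using conicD[OF conic generator_in_cone[OF assms(1)], of "- \<mu>"] w by simp
    then have "w = 0" using pointed generator_in_cone[OF assms(2)] by blast
    then show False using generator_nonzero assms(2) by blast
  qed
qed

text \<open>Irredundancy forces a nonnegative combination lying on the ray of a generator \<open>v\<close> to
use \<open>v\<close> alone: the excess coefficient of \<open>v\<close> is nonnegative, and then pointedness kills the rest.\<close>

lemma nonneg_comb_on_ray:
  assumes d: "\<forall>w\<in>S. d w \<ge> 0" and v: "v \<in> S" and t: "(\<Sum>w\<in>S. d w *\<^sub>R w) = t *\<^sub>R v"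
  shows "\<forall>w\<in>S - {v}. d w = 0"
proof -
  have sum_split: "t *\<^sub>R v = d v *\<^sub>R v + (\<Sum>w\<in>S-{v}. d w *\<^sub>R w)"
    using t v finite_generators by (simp add: sum.remove)
  have "t \<le> d v"
  proof (rule ccontr)
    assume "\<not> t \<le> d v"
    then have pos: "t - d v > 0" by simp
    have "v = (1 / (t - d v)) *\<^sub>R ((t - d v) *\<^sub>R v)" using pos by simp
    also have "(t - d v) *\<^sub>R v = (\<Sum>w\<in>S-{v}. d w *\<^sub>R w)"
      using sum_split by (simp add: algebra_simps)
    also have "(1 / (t - d v)) *\<^sub>R \<dots> = (\<Sum>w\<in>S-{v}. (d w / (t - d v)) *\<^sub>R w)"
      by (simp add: scaleR_sum_right)
    finally have "v \<in> cone_generated_by (S - {v})"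
      unfolding cone_generated_by_def using d pos by auto
    then show False using irredundant v by blast
  qed
  define d' where "d' w = (if w = v then d v - t else d w)" for w
  have "(\<Sum>w\<in>S. d' w *\<^sub>R w) = (d v - t) *\<^sub>R v + (\<Sum>w\<in>S-{v}. d w *\<^sub>R w)"
    using v finite_generators by (simp add: sum.remove d'_def)
  also have "\<dots> = 0" using sum_split by (simp add: algebra_simps)
  finally have "\<forall>w\<in>S. d' w = 0"
    using nonneg_comb_eq_0[of d'] d \<open>t \<le> d v\<close> by (auto simp: d'_def)
  then show ?thesis unfolding d'_def by (metis Diff_iff insertI1)
qed

lemma ray_face_of: "v \<in> S \<Longrightarrow> ray v face_of C"
proof -
  assume v: "v \<in> S"
  have endpoint: "a \<in> ray v"
    if a: "a \<in> C" and b: "b \<in> C" and x: "x \<in> ray v"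
      and u: "0 < u" "u < 1" "x = (1 - u) *\<^sub>R a + u *\<^sub>R b" for a b x u
  proof -
    obtain \<alpha> where \<alpha>: "\<forall>w\<in>S. \<alpha> w \<ge> 0" "a = (\<Sum>w\<in>S. \<alpha> w *\<^sub>R w)"
      using a unfolding cone_eq cone_generated_by_def by blast
    obtain \<beta> where \<beta>: "\<forall>w\<in>S. \<beta> w \<ge> 0" "b = (\<Sum>w\<in>S. \<beta> w *\<^sub>R w)"
      using b unfolding cone_eq cone_generated_by_def by blast
    obtain t where t: "x = t *\<^sub>R v" using x unfolding ray_def by blast
    have "(\<Sum>w\<in>S. ((1 - u) * \<alpha> w + u * \<beta> w) *\<^sub>R w) = t *\<^sub>R v"
      using u(3) t unfolding \<alpha>(2) \<beta>(2)
      by (simp add: scaleR_sum_right scaleR_add_left sum.distrib)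
    then have "\<forall>w\<in>S - {v}. (1 - u) * \<alpha> w + u * \<beta> w = 0"
      using \<alpha>(1) \<beta>(1) u v by (intro nonneg_comb_on_ray) auto
    then have "\<forall>w\<in>S - {v}. \<alpha> w = 0"
      using \<alpha>(1) \<beta>(1) u by (simp add: add_nonneg_eq_0_iff)
    then have "a = \<alpha> v *\<^sub>R v" using \<alpha>(2) v finite_generators by (simp add: sum.remove)
    then show ?thesis using \<alpha>(1) v unfolding ray_def by auto
  qed
  have "a \<in> ray v \<and> b \<in> ray v"
    if abx: "a \<in> C" "b \<in> C" "x \<in> ray v" "x \<in> open_segment a b" for a b x
  proof -
    obtain u where u: "0 < u" "u < 1" "x = (1 - u) *\<^sub>R a + u *\<^sub>R b"
      using abx(4) unfolding in_segment by blast
    show ?thesis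
      using endpoint[OF abx(1-3) u] endpoint[OF abx(2,1,3), of "1 - u"] u
      by (simp add: algebra_simps)
  qed
  moreover have "ray v \<subseteq> C"
    unfolding ray_def using conicD[OF conic generator_in_cone[OF v]] by auto
  ultimately show ?thesis unfolding face_of_def using convex_ray by blast
qed

lemma extremal_ray_generator: "v \<in> S \<Longrightarrow> extremal_ray C (ray v)"
  unfolding extremal_ray_def using ray_face_of aff_dim_ray generator_nonzero by blast

text \<open>A point of a face is a nonnegative combination of generators, each of which with a
positive coefficient lies in the face: it is the scaled endpoint of a segment through the point.\<close>

lemma face_subset_cone_generated_by_generators:
  assumes F: "F face_of C"
  shows "F \<subseteq> cone_generated_by (S \<inter> F)"
proof
  fix x assume x: "x \<in> F"
  then have "x \<in> C" using F face_of_imp_subset by blast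
  then obtain c where c: "\<forall>w\<in>S. c w \<ge> 0" "x = (\<Sum>w\<in>S. c w *\<^sub>R w)"
    unfolding cone_eq cone_generated_by_def by blast
  have in_F: "v \<in> F" if v: "v \<in> S" "c v > 0" for v
  proof -
    define r where "r = (\<Sum>w\<in>S-{v}. c w *\<^sub>R w)"
    have r: "r \<in> C"
      using cone_generated_by_mono[OF finite_generators, of "S-{v}"] c(1)
      unfolding cone_eq cone_generated_by_def r_def by auto
    define a where "a = (2 * c v) *\<^sub>R v"
    define b where "b = 2 *\<^sub>R r"
    have aC: "a \<in> C" using v conicD[OF conic generator_in_cone] unfolding a_def by simp
    have bC: "b \<in> C" using conicD[OF conic r] unfolding b_def by simp
    have mid: "x = midpoint a b"
      using c(2) v finite_generators
      by (simp add: sum.remove r_def a_def b_def midpoint_def scaleR_add_right)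
    have "a \<in> F"
    proof (cases "a = b")
      case True then show ?thesis using mid x by (simp add: midpoint_def)
    next
      case False
      then have "x \<in> open_segment a b" using mid by simp
      then show ?thesis using face_ofD[OF F _ aC bC x] by blast
    qed
    then have "(1 / (2 * c v)) *\<^sub>R a \<in> F" using face_of_conic_scaleR[OF conic F] v by simp
    then show ?thesis using v by (simp add: a_def)
  qed
  have "x = (\<Sum>w\<in>S \<inter> F. c w *\<^sub>R w)"
    unfolding c(2) by (rule sum.mono_neutral_right)
      (use finite_generators in_F c(1) in \<open>auto simp: less_eq_real_def\<close>)
  then show "x \<in> cone_generated_by (S \<inter> F)" unfolding cone_generated_by_def using c(1) by auto
qed

lemma extremal_ray_eq_ray_generator:
  assumes "extremal_ray C R"
  obtains v where "v \<in> S" "R = ray v"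
proof -
  have F: "R face_of C" and aff: "aff_dim R = 1" using assms unfolding extremal_ray_def by auto
  then have "R \<noteq> {}" by auto
  then have "0 \<in> R" using zero_in_face_of_conic[OF conic F] by blast
  then have dim_R: "dim R = 1" using aff by (simp add: aff_dim_eq_dim_if_zero_mem)
  have "S \<inter> R \<noteq> {}"
  proof
    assume "S \<inter> R = {}"
    then have "R \<subseteq> {0}"
      using face_subset_cone_generated_by_generators[OF F] cone_generated_by_subset_span[of "S \<inter> R"]
      by simp
    then show False using aff_dim_subset[of R "{0}"] aff by simp
  qed
  then obtain v where v: "v \<in> S" "v \<in> R" by blast
  have "R = ray v"
  proof
    show "ray v \<subseteq> R" unfolding ray_def using face_of_conic_scaleR[OF conic F v(2)] by auto
    show "R \<subseteq> ray v"
    proof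
      fix y assume y: "y \<in> R"
      have "R \<subseteq> span {v}"
        using v generator_nonzero dim_R by (intro card_ge_dim_independent) auto
      then obtain k where k: "y = k *\<^sub>R v" using y by (auto simp: span_singleton)
      have "k \<ge> 0"
      proof (rule ccontr)
        assume "\<not> k \<ge> 0"
        then have "- y \<in> C" using k conicD[OF conic generator_in_cone[OF v(1)], of "- k"] by simp
        then have "y = 0" using pointed y F face_of_imp_subset by blast
        then show False using k generator_nonzero[OF v(1)] \<open>\<not> k \<ge> 0\<close> by simp
      qed
      then show "y \<in> ray v" using k unfolding ray_def by auto
    qed
  qed
  then show thesis using v that by blast
qed

lemma extremal_rays_in_face:
  assumes F: "F face_of C"
  shows "{R. extremal_ray C R \<and> R \<subseteq> F} = ray ` (S \<inter> F)"
proof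
  show "{R. extremal_ray C R \<and> R \<subseteq> F} \<subseteq> ray ` (S \<inter> F)"
  proof clarify
    fix R assume R: "extremal_ray C R" "R \<subseteq> F"
    obtain v where "v \<in> S" "R = ray v" using R(1) by (rule extremal_ray_eq_ray_generator)
    then show "R \<in> ray ` (S \<inter> F)" using R(2) ray_base by blast
  qed
  show "ray ` (S \<inter> F) \<subseteq> {R. extremal_ray C R \<and> R \<subseteq> F}"
    using extremal_ray_generator face_of_conic_scaleR[OF conic F] unfolding ray_def by auto
qed

lemma span_generators_in_face:
  assumes "F face_of C"
  shows "span (S \<inter> F) = span F"
proof -
  have "F \<subseteq> span (S \<inter> F)"
    using face_subset_cone_generated_by_generators[OF assms] cone_generated_by_subset_span
    by blast
  moreover have "S \<inter> F \<subseteq> span F" by (auto intro: span_base)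
  ultimately show ?thesis by (simp add: span_eq)
qed

text \<open>If the generators are in general position, the cone is simplicial: a facet, of dimension
\<open>DIM('a) - 1\<close>, is spanned by its generators, and more than \<open>DIM('a) - 1\<close> of them would contain
\<open>DIM('a)\<close> independent vectors.\<close>

lemma facet_generators_independent:
  assumes full: "span C = UNIV"
    and general_position: "\<And>W. W \<subseteq> S \<Longrightarrow> card W \<le> DIM('a) \<Longrightarrow> independent W"
    and facet: "facet C F"
  shows "card (S \<inter> F) = DIM('a) - 1" "independent (S \<inter> F)"
proof -
  have "0 \<in> C" by (simp add: cone_eq zero_in_cone_generated_by)
  moreover have "dim C = DIM('a)" by (metis dim_UNIV dim_span full)
  ultimately have "aff_dim C = DIM('a)" by (simp add: aff_dim_eq_dim_if_zero_mem)
  then have F: "F face_of C" and aff_F: "aff_dim F = int (DIM('a) - 1)"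
    using facet unfolding facet_def by auto
  then have "F \<noteq> {}" by auto
  then have "0 \<in> F" using zero_in_face_of_conic[OF conic F] by blast
  then have "dim F = DIM('a) - 1" using aff_F by (simp add: aff_dim_eq_dim_if_zero_mem)
  then have dim_V: "dim (S \<inter> F) = DIM('a) - 1"
    using span_generators_in_face[OF F] by (metis span_eq_dim)
  have card_V: "card (S \<inter> F) \<le> DIM('a) - 1"
  proof (rule ccontr)
    assume "\<not> card (S \<inter> F) \<le> DIM('a) - 1"
    then have "DIM('a) \<le> card (S \<inter> F)" using DIM_positive[where 'a='a] by linarith
    then obtain V' where V': "V' \<subseteq> S \<inter> F" "card V' = DIM('a)"
      by (rule obtain_subset_with_card_n)
    then have "independent V'" using general_position by auto
    then have "card V' \<le> dim (S \<inter> F)" by (rule independent_card_le_dim[OF V'(1)])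
    then show False using V'(2) dim_V DIM_positive[where 'a='a] by linarith
  qed
  then show indep: "independent (S \<inter> F)" using general_position by auto
  show "card (S \<inter> F) = DIM('a) - 1" using dim_eq_card_independent[OF indep] dim_V by simp
qed

end

lemma pointed_polyhedral_cone_minimally_generated:
  assumes "polyhedral_cone C" "pointed_cone C"
  obtains S where "minimally_generated_cone S C"
proof -
  obtain S where S: "finite S" "C = cone_generated_by S"
    "\<And>v. v \<in> S \<Longrightarrow> v \<notin> cone_generated_by (S - {v})"
    using polyhedral_cone_minimal_generators[OF assms(1)] by blast
  have "conic C" using S(2) conic_cone_generated_by by simp
  then have "minimally_generated_cone S C"
    using S pointed_coneD[OF assms(2)] by unfold_locales auto
  then show thesis by (rule that)
qed

lemma veronese_generators_general_position:
  fixes S C :: "(real ^ 'n) set"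
  assumes "minimally_generated_cone S C"
    and idx: "bij_betw idx UNIV {0..m}"
    and rays_on_curve: "\<forall>R. extremal_ray C R \<longrightarrow>
      (\<exists>p q. (p, q) \<noteq> (0, 0) \<and> R \<subseteq> veronese_line idx m p q)"
    and W: "W \<subseteq> S" "card W \<le> Suc m"
  shows "independent W"
proof (rule veronese_family_independent[OF idx _ W(2)])
  interpret minimally_generated_cone S C by fact
  show "finite W" using W finite_generators finite_subset by auto
  show "\<forall>v\<in>W. v \<noteq> 0 \<and> (\<exists>p q. (p, q) \<noteq> (0, 0) \<and> v \<in> veronese_line idx m p q)"
  proof
    fix v assume "v \<in> W"
    then have v: "v \<in> S" using W by blast
    obtain p q where "(p, q) \<noteq> (0, 0)" "ray v \<subseteq> veronese_line idx m p q"
      using rays_on_curve extremal_ray_generator[OF v] by blast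
    then show "v \<noteq> 0 \<and> (\<exists>p q. (p, q) \<noteq> (0, 0) \<and> v \<in> veronese_line idx m p q)"
      using ray_base generator_nonzero[OF v] by blast
  qed
  show "\<And>v w. v \<in> W \<Longrightarrow> w \<in> W \<Longrightarrow> v \<noteq> w \<Longrightarrow> w \<notin> span {v}"
    using W generator_not_in_span_of_other by blast
qed

theorem theorem3p5:
  fixes m :: nat and idx :: "'n::finite \<Rightarrow> nat" and \<sigma> :: "(real ^ 'n) set"
  assumes "m \<ge> 2"
    and "bij_betw idx UNIV {0..m}"
    and "polyhedral_cone \<sigma>"
    and "span \<sigma> = UNIV"
    and "pointed_cone \<sigma>"
    and "\<forall>R. extremal_ray \<sigma> R \<longrightarrow>
           (\<exists>p q. (p, q) \<noteq> (0, 0) \<and> R \<subseteq> veronese_line idx m p q)"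
  shows "\<forall>F. facet \<sigma> F \<longrightarrow>
           (\<exists>V. finite V \<and> card V = m \<and> independent V \<and>
                {R. extremal_ray \<sigma> R \<and> R \<subseteq> F} = ray ` V)"
proof (intro allI impI)
  fix F assume facet: "facet \<sigma> F"
  obtain S where S: "minimally_generated_cone S \<sigma>"
    using pointed_polyhedral_cone_minimally_generated[OF assms(3,5)] by blast
  interpret minimally_generated_cone S \<sigma> by (fact S)
  have dim: "DIM(real ^ 'n) = Suc m" using bij_betw_same_card[OF assms(2)] by simp
  have "independent W" if "W \<subseteq> S" "card W \<le> DIM(real ^ 'n)" for W
    using veronese_generators_general_position[OF S assms(2,6)] that dim by simp
  then have "card (S \<inter> F) = DIM(real ^ 'n) - 1" "independent (S \<inter> F)"
    using facet_generators_independent[OF assms(4) _ facet] by blast+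
  moreover have "{R. extremal_ray \<sigma> R \<and> R \<subseteq> F} = ray ` (S \<inter> F)"
    using facet unfolding facet_def by (intro extremal_rays_in_face) simp
  ultimately show "\<exists>V. finite V \<and> card V = m \<and> independent V \<and>
      {R. extremal_ray \<sigma> R \<and> R \<subseteq> F} = ray ` V"
    using finite_generators dim by auto
qed

end
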